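(* Let $n\geqslant k$ and suppose the minimum of $F(S)=\vol\left(\mathop{\rm co}\{\pm v_1,\ldots,\pm v_n\}\right)$ over $S=(v_1,\dots,v_n)\in\Omega(n,k)$ is attained at $S=(v_1,\ldots,v_n)$. Then: (1) every vector $v_i$, $i\in[n]$, is a vertex of $\mathop{\rm co}\{\pm v_1,\ldots,\pm v_n\}$; (2) $|v_j|\leqslant\sqrt2\,|v_i|$ for all $i,j\in[n]$; (3) at most $\lfloor n/k\rfloor+1$ vectors of $S$ are collinear.
   Context: An $(n,k)$-uframe is an ordered $n$-tuple $(v_1,\dots,v_n)$ of vectors in $\mathbb{R}^k$ spanning $\mathbb{R}^k$ with $\sum_{i=1}^n v_iv_i^T=I_k$; $\Omega(n,k)$ is the set of all of them. $\vol$ is $k$-dimensional volume, $|\cdot|$ the Euclidean norm. *)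

theory Defs
  imports "HOL-Analysis.Analysis"
begin

definition uframe :: "nat \<Rightarrow> (nat \<Rightarrow> real^'k) \<Rightarrow> bool" where
  "uframe n v \<longleftrightarrow> span (v ` {..<n}) = UNIV \<and>
     (\<Sum>i<n. (\<chi> a b. (v i) $ a * (v i) $ b)) = (mat 1 :: real^'k^'k)"

definition frame_vol :: "nat \<Rightarrow> (nat \<Rightarrow> real^'k) \<Rightarrow> real" where
  "frame_vol n v = measure lebesgue (convex hull (v ` {..<n} \<union> uminus ` v ` {..<n}))"

end

(*
  If v minimises the volume, replace v i by an arbitrary point y of the polytope
  P = conv {+-v 1, ..., +-v n}.  The new tuple has frame operator I - v_i v_i^T + y y^T,
  whose determinant is D(y) = (1 - |v_i|^2)(1 + |y|^2) + (v_i . y)^2.  Renormalising it to a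
  unit frame by a square root of this operator multiplies the volume by 1/sqrt D(y), while the
  new polytope lies inside P; minimality therefore forces D(y) <= 1 on P.
  (1) D is strictly convex and D(v_i) = 1, so v_i cannot lie inside a segment of P
      (if |v_i| = 1 use |y| <= 1 on P instead).
  (2) Take y = v_j.
  (3) Summing D(v_l) <= 1 over l gives |v_i|^2 >= k / (n + k - 1), whereas by the Parseval
      identity the squared lengths of frame vectors on a common line sum to at most 1.
*)
theory Submission
  imports Defs
begin

section \<open>Volume of linear images\<close>

lemma measure_shear_cbox:
  fixes a b :: "real^'n"
  assumes "m \<noteq> n"
  shows "measure lebesgue ((\<lambda>x. \<chi> i. if i = m then x $ m + x $ n else x $ i) ` cbox a b)
    = measure lebesgue (cbox a b)"
proof (cases "cbox a b = {}")
  case False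
  let ?h = "\<lambda>x :: real^'n. \<chi> i. if i = m then x $ m + x $ n else x $ i"
  have box: "cbox a b = (+) a ` cbox 0 (b - a)"
    by (metis add.right_neutral cbox_translation diff_add_cancel add.commute)
  then have "?h ` cbox a b = (+) (?h a) ` ?h ` cbox 0 (b - a)"
    by (auto simp: image_image vec_eq_iff)
  then have "measure lebesgue (?h ` cbox a b) = measure lebesgue (?h ` cbox 0 (b - a))"
    by (simp add: measure_translation)
  also have "\<dots> = measure lebesgue (cbox 0 (b - a))"
    using False box assms by (intro measure_shear_interval) auto
  finally show ?thesis
    by (simp add: box measure_translation)
qed simp

lemma det_matrix_shear:
  assumes "m \<noteq> n"
  shows "det (matrix (\<lambda>x :: real^'n. \<chi> i. if i = m then x $ m + x $ n else x $ i)) = 1"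
proof -
  have "matrix (\<lambda>x :: real^'n. \<chi> i. if i = m then x $ m + x $ n else x $ i)
      = (\<chi> k. if k = m then row m (mat 1) + 1 *s row n (mat 1) else row k (mat 1))"
    using assms by (auto simp: matrix_def axis_def mat_def row_def vec_eq_iff)
  then show ?thesis
    using det_row_operation[OF assms, of "mat 1 :: real^'n^'n" 1] by simp
qed

(* In the coordinates m, n: (a, b) -> (a + b, b) -> (a + b, - a) -> (b, - a) -> (b, a). *)
lemma coordinate_swap_eq_shears:
  fixes m n :: "'n::finite"
  assumes "m \<noteq> n"
  defines "shear \<equiv> \<lambda>p q (x :: real^'n). \<chi> i. if i = p then x $ p + x $ q else x $ i"
    and "flip \<equiv> \<lambda>x :: real^'n. \<chi> i. (if i = n then -1 else 1) * x $ i"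
  shows "(\<lambda>x. \<chi> i. x $ Transposition.transpose m n i)
    = flip \<circ> shear m n \<circ> (flip \<circ> shear n m \<circ> flip) \<circ> shear m n"
  using assms by (auto simp: fun_eq_iff vec_eq_iff Transposition.transpose_def)

definition scales_measure_by_det :: "(real^'n \<Rightarrow> real^'n) \<Rightarrow> bool" where
  "scales_measure_by_det f \<longleftrightarrow> (\<forall>S \<in> lmeasurable.
    f ` S \<in> lmeasurable \<and> measure lebesgue (f ` S) = \<bar>det (matrix f)\<bar> * measure lebesgue S)"

lemma scales_measure_by_det_comp:
  fixes f g :: "real^'n \<Rightarrow> real^'n"
  assumes "linear f" "linear g" "scales_measure_by_det f" "scales_measure_by_det g"
  shows "scales_measure_by_det (f \<circ> g)"
  unfolding scales_measure_by_det_def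
proof
  fix S :: "(real^'n) set"
  assume "S \<in> lmeasurable"
  with assms(4) have gS: "g ` S \<in> lmeasurable"
    "measure lebesgue (g ` S) = \<bar>det (matrix g)\<bar> * measure lebesgue S"
    by (simp_all add: scales_measure_by_det_def)
  with assms(3) have "f ` g ` S \<in> lmeasurable"
    "measure lebesgue (f ` g ` S) = \<bar>det (matrix f)\<bar> * measure lebesgue (g ` S)"
    by (simp_all add: scales_measure_by_det_def)
  with gS show "(f \<circ> g) ` S \<in> lmeasurable
      \<and> measure lebesgue ((f \<circ> g) ` S) = \<bar>det (matrix (f \<circ> g))\<bar> * measure lebesgue S"
    by (simp add: image_comp matrix_compose[OF assms(2,1)] det_mul abs_mult)
qed

lemma scales_measure_by_det_stretch:
  "scales_measure_by_det (\<lambda>x :: real^'n. \<chi> i. c i * x $ i)"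
  by (simp add: scales_measure_by_det_def measurable_stretch measure_stretch matrix_def axis_def
      det_diagonal)

lemma scales_measure_by_det_shear:
  assumes "m \<noteq> n"
  shows "scales_measure_by_det (\<lambda>x :: real^'n. \<chi> i. if i = m then x $ m + x $ n else x $ i)"
  unfolding scales_measure_by_det_def
proof
  let ?h = "\<lambda>x :: real^'n. \<chi> i. if i = m then x $ m + x $ n else x $ i"
  have lin: "linear ?h"
    by (auto simp: vec_eq_iff algebra_simps intro!: linearI)
  fix S :: "(real^'n) set"
  assume "S \<in> lmeasurable"
  from measure_linear_sufficient[OF lin this, of 1] show "?h ` S \<in> lmeasurable
      \<and> measure lebesgue (?h ` S) = \<bar>det (matrix ?h)\<bar> * measure lebesgue S"
    by (simp add: measure_shear_cbox det_matrix_shear assms)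
qed

(* Change_Of_Vars proves this as measure_linear_image only for index types of sort wellorder. *)
lemma measure_linear_image_finite:
  fixes f :: "real^'n \<Rightarrow> real^'n"
  assumes "linear f" "S \<in> lmeasurable"
  shows "f ` S \<in> lmeasurable \<and> measure lebesgue (f ` S) = \<bar>det (matrix f)\<bar> * measure lebesgue S"
proof -
  have "scales_measure_by_det f"
  proof (rule induct_linear_elementary[OF assms(1)])
    show "scales_measure_by_det (f \<circ> g)"
      if "linear f" "linear g" "scales_measure_by_det f" "scales_measure_by_det g" for f g
      using that by (rule scales_measure_by_det_comp)
  next
    fix f :: "real^'n \<Rightarrow> real^'n" and i
    assume "linear f" "\<And>x. f x $ i = 0"
    then have "\<not> inj f"
      by (metis linear_injective_imp_surjective one_neq_zero surjE vec_component)
    then have "det (matrix f) = 0" "\<And>S. negligible (f ` S)"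
      using \<open>linear f\<close> det_nz_iff_inj negligible_linear_singular_image by blast+
    then show "scales_measure_by_det f"
      by (simp add: scales_measure_by_det_def negligible_iff_measure)
  next
    show "scales_measure_by_det (\<lambda>x. \<chi> i. c i * x $ i)" for c
      by (rule scales_measure_by_det_stretch)
  next
    fix m n :: 'n
    assume "m \<noteq> n"
    have "linear (\<lambda>x :: real^'n. \<chi> i. c i * x $ i)" for c
      by (auto simp: vec_eq_iff algebra_simps intro!: linearI)
    moreover have "linear (\<lambda>x :: real^'n. \<chi> i. if i = p then x $ p + x $ q else x $ i)" for p q
      by (auto simp: vec_eq_iff algebra_simps intro!: linearI)
    ultimately show "scales_measure_by_det (\<lambda>x. \<chi> i. x $ Transposition.transpose m n i)"
      unfolding coordinate_swap_eq_shears[OF \<open>m \<noteq> n\<close>] using \<open>m \<noteq> n\<close>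
      by (intro scales_measure_by_det_comp linear_compose scales_measure_by_det_stretch
          scales_measure_by_det_shear) auto
  next
    show "scales_measure_by_det (\<lambda>x. \<chi> i. if i = m then x $ m + x $ n else x $ i)"
      if "m \<noteq> n" for m n
      using that by (rule scales_measure_by_det_shear)
  qed
  with assms(2) show ?thesis
    by (simp add: scales_measure_by_det_def)
qed

section \<open>Maximisers of strictly convex functions\<close>

lemma inner_convex_combination_self:
  fixes a b :: "'a::real_inner"
  shows "((1 - u) *\<^sub>R a + u *\<^sub>R b) \<bullet> ((1 - u) *\<^sub>R a + u *\<^sub>R b)
    = (1 - u) * (a \<bullet> a) + u * (b \<bullet> b) - u * (1 - u) * ((a - b) \<bullet> (a - b))"
  by (simp add: inner_add_left inner_add_right inner_diff_left inner_diff_right inner_commute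
      algebra_simps)

lemma inner_quadratic_strict_convex:
  fixes a b w :: "'a::real_inner"
  assumes "\<alpha> > 0" "a \<noteq> b" "0 < u" "u < 1"
  defines "q \<equiv> \<lambda>y. \<alpha> * (y \<bullet> y) + (w \<bullet> y)\<^sup>2"
  shows "q ((1 - u) *\<^sub>R a + u *\<^sub>R b) < (1 - u) * q a + u * q b"
proof -
  have "q ((1 - u) *\<^sub>R a + u *\<^sub>R b)
      = (1 - u) * q a + u * q b - u * (1 - u) * (\<alpha> * ((a - b) \<bullet> (a - b)) + (w \<bullet> (a - b))\<^sup>2)"
    using inner_convex_combination_self[of u a b]
      inner_convex_combination_self[of u "w \<bullet> a" "w \<bullet> b"]
    by (simp add: q_def inner_add_right inner_diff_right power2_eq_square algebra_simps)
  moreover have "0 < u * (1 - u) * (\<alpha> * ((a - b) \<bullet> (a - b)) + (w \<bullet> (a - b))\<^sup>2)"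
    using assms by (intro mult_pos_pos add_pos_nonneg) auto
  ultimately show ?thesis
    by linarith
qed

lemma extreme_point_of_strict_convex_max:
  fixes f :: "'a::real_vector \<Rightarrow> real"
  assumes "x \<in> S" and max: "\<And>y. y \<in> S \<Longrightarrow> f y \<le> f x"
    and strict: "\<And>a b u. a \<in> S \<Longrightarrow> b \<in> S \<Longrightarrow> a \<noteq> b \<Longrightarrow> 0 < u \<Longrightarrow> u < 1 \<Longrightarrow>
      f ((1 - u) *\<^sub>R a + u *\<^sub>R b) < (1 - u) * f a + u * f b"
  shows "x extreme_point_of S"
proof -
  have "x \<notin> open_segment a b" if "a \<in> S" "b \<in> S" for a b
  proof
    assume "x \<in> open_segment a b"
    then obtain u where "a \<noteq> b" "0 < u" "u < 1" and x: "x = (1 - u) *\<^sub>R a + u *\<^sub>R b"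
      by (auto simp: in_segment)
    then have "f x < (1 - u) * f a + u * f b"
      using strict that by blast
    also have "\<dots> \<le> (1 - u) * f x + u * f x"
      using max that \<open>0 < u\<close> \<open>u < 1\<close> by (intro add_mono mult_left_mono) auto
    finally show False
      by (simp add: algebra_simps)
  qed
  with \<open>x \<in> S\<close> show ?thesis
    by (simp add: extreme_point_of_def)
qed

section \<open>Rank-one updates of the identity\<close>

definition outer :: "real^'n \<Rightarrow> real^'n \<Rightarrow> real^'n^'n" where
  "outer x y = (\<chi> a b. x $ a * y $ b)"

lemma outer_mult_vec: "outer x y *v z = (y \<bullet> z) *\<^sub>R x"
  by (simp add: vec_eq_iff outer_def matrix_vector_mult_def inner_vec_def sum_distrib_left mult_ac)

lemma outer_mult_outer: "outer x y ** outer y' z = (y \<bullet> y') *\<^sub>R outer x z"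
  by (simp add: vec_eq_iff outer_def matrix_matrix_mult_def inner_vec_def sum_distrib_left
      sum_distrib_right mult_ac)

lemma outer_matrix_vector_mult: "outer (M *v x) (M *v y) = M ** outer x y ** transpose M"
  by (simp add: vec_eq_iff outer_def matrix_vector_mult_def matrix_matrix_mult_def transpose_def
      sum_distrib_left sum_distrib_right mult_ac)

lemma matrix_add_rdistrib: "(A + B) ** C = A ** C + B ** (C :: real^'n^'m)"
  by (simp add: vec_eq_iff matrix_matrix_mult_def sum.distrib distrib_right)

lemma matrix_sum_left: "(\<Sum>i\<in>I. A i) ** B = (\<Sum>i\<in>I. A i ** B :: real^'n^'m)"
  by (induction I rule: infinite_finite_induct) (auto simp: matrix_add_rdistrib)

lemma matrix_sum_right: "B ** (\<Sum>i\<in>I. A i) = (\<Sum>i\<in>I. B ** A i :: real^'n^'m)"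
  by (induction I rule: infinite_finite_induct) (auto simp: matrix_add_ldistrib)

lemma matrix_sum_vector: "(\<Sum>i\<in>I. A i) *v x = (\<Sum>i\<in>I. A i *v x :: real^'m)"
  by (induction I rule: infinite_finite_induct) (auto simp: matrix_vector_mult_add_rdistrib)

lemma transpose_rank_one_update: "transpose (mat 1 + a *\<^sub>R outer x x) = mat 1 + a *\<^sub>R outer x x"
  by (simp add: vec_eq_iff transpose_def mat_def outer_def mult.commute)

lemma rank_one_update_mult:
  "(mat 1 + a *\<^sub>R outer x x) ** (mat 1 + b *\<^sub>R outer x x)
     = mat 1 + (a + b + a * b * (x \<bullet> x)) *\<^sub>R outer x x"
  by (simp add: matrix_add_ldistrib matrix_add_rdistrib matrix_scalar_ac outer_mult_outer
      scaleR_add_right flip: scalar_matrix_assoc) (simp add: algebra_simps)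

lemma det_rank_one_update: "det (mat 1 + a *\<^sub>R outer x x :: real^'n^'n) = 1 + a * (x \<bullet> x)"
proof (cases "x = 0")
  case True
  then show ?thesis by (simp add: outer_def vec_eq_iff zero_vec_def[symmetric])
next
  case False
  have "norm (x /\<^sub>R norm x) = 1"
    using False by simp
  then obtain Q :: "real^'n^'n" and k where Q: "orthogonal_matrix Q" "Q *v axis k 1 = x /\<^sub>R norm x"
    using orthogonal_matrix_exists_basis by metis
  have QQ: "transpose Q ** Q = mat 1"
    using Q(1) by (simp add: orthogonal_matrix_def)
  have Qx: "transpose Q *v x = norm x *\<^sub>R axis k 1"
    using Q False by (metis QQ matrix_vector_mul_assoc matrix_vector_mul_lid
        matrix_vector_mult_scaleR scaleR_one divideR_right norm_eq_zero)
  have "transpose Q ** (mat 1 + a *\<^sub>R outer x x) ** Q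
      = mat 1 + a *\<^sub>R outer (transpose Q *v x) (transpose Q *v x)"
    using outer_matrix_vector_mult[of "transpose Q" x x] QQ
    by (simp add: matrix_add_ldistrib matrix_add_rdistrib matrix_scalar_ac flip: scalar_matrix_assoc
        matrix_mul_assoc)
  also have "\<dots> = (\<chi> i j. if i = j then if i = k then 1 + a * (x \<bullet> x) else 1 else 0)"
    unfolding Qx
    by (auto simp: vec_eq_iff outer_def mat_def axis_def dot_square_norm power2_eq_square)
  finally have "det (transpose Q ** (mat 1 + a *\<^sub>R outer x x) ** Q) = 1 + a * (x \<bullet> x)"
    by (subst det_diagonal) (auto simp: prod.If_cases)
  then have "det (mat 1 + a *\<^sub>R outer x x) * (det Q)\<^sup>2 = 1 + a * (x \<bullet> x)"
    by (simp add: det_mul det_transpose power2_eq_square mult_ac)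
  then show ?thesis
    using det_orthogonal_matrix[OF Q(1)] by auto
qed

lemma rank_one_update_square_root:
  fixes x :: "real^'n"
  assumes "0 \<le> 1 + a * (x \<bullet> x)"
  defines "\<sigma> \<equiv> a / (1 + sqrt (1 + a * (x \<bullet> x)))"
  shows "(mat 1 + \<sigma> *\<^sub>R outer x x) ** (mat 1 + \<sigma> *\<^sub>R outer x x) = mat 1 + a *\<^sub>R outer x x"
    and "det (mat 1 + \<sigma> *\<^sub>R outer x x) = sqrt (1 + a * (x \<bullet> x))"
proof -
  define r where "r = sqrt (1 + a * (x \<bullet> x))"
  have "r \<ge> 0" "r\<^sup>2 = 1 + a * (x \<bullet> x)"
    using assms(1) by (simp_all add: r_def)
  moreover have "\<sigma> * (1 + r) = a"
    unfolding \<sigma>_def r_def[symmetric] using \<open>r \<ge> 0\<close> by simp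
  ultimately have "(1 + \<sigma> * (x \<bullet> x)) * (1 + r) = r * (1 + r)"
    by algebra
  then have det: "1 + \<sigma> * (x \<bullet> x) = r"
    using \<open>r \<ge> 0\<close> by simp
  have "\<sigma> + \<sigma> + \<sigma> * \<sigma> * (x \<bullet> x) = \<sigma> * (1 + (1 + \<sigma> * (x \<bullet> x)))"
    by (simp add: algebra_simps)
  then have "\<sigma> + \<sigma> + \<sigma> * \<sigma> * (x \<bullet> x) = a"
    using det \<open>\<sigma> * (1 + r) = a\<close> by simp
  then show "(mat 1 + \<sigma> *\<^sub>R outer x x) ** (mat 1 + \<sigma> *\<^sub>R outer x x) = mat 1 + a *\<^sub>R outer x x"
    by (simp add: rank_one_update_mult)
  show "det (mat 1 + \<sigma> *\<^sub>R outer x x) = sqrt (1 + a * (x \<bullet> x))"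
    using det by (simp add: det_rank_one_update r_def)
qed

lemma rank_one_update_inverse:
  assumes "1 + a * (x \<bullet> x) \<noteq> 0"
  shows "(mat 1 + a *\<^sub>R outer x x) ** (mat 1 + (- a / (1 + a * (x \<bullet> x))) *\<^sub>R outer x x) = mat 1"
  unfolding rank_one_update_mult using assms by (simp add: field_simps)

lemma identity_minus_outer_square_root:
  fixes v :: "real^'n"
  assumes "v \<bullet> v < 1"
  obtains S where "transpose S = S" "S ** S = mat 1 - outer v v" "det S = sqrt (1 - v \<bullet> v)"
    and "\<And>y. \<exists>z. S *v z = y \<and> (1 - v \<bullet> v) * (1 + z \<bullet> z) = (1 - v \<bullet> v) * (1 + y \<bullet> y) + (v \<bullet> y)\<^sup>2"
proof -
  define c where "c = v \<bullet> v"
  define t where "t = sqrt (1 - c)"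
  have "t > 0" and c_eq: "c = 1 - t\<^sup>2"
    using assms by (simp_all add: t_def c_def)
  define \<sigma> where "\<sigma> = -1 / (1 + t)"
  define S where "S = mat 1 + \<sigma> *\<^sub>R outer v v"
  have SS: "S ** S = mat 1 - outer v v" and detS: "det S = t"
    using rank_one_update_square_root[of "-1" v] assms
    by (simp_all add: S_def \<sigma>_def t_def c_def)
  define \<tau> where "\<tau> = 1 / (t * (1 + t))"
  have "1 + \<sigma> * c = t"
    using detS by (simp add: S_def det_rank_one_update c_def)
  then have "\<tau> = - \<sigma> / (1 + \<sigma> * c)"
    by (simp add: \<tau>_def \<sigma>_def)
  then have S_inverse: "S ** (mat 1 + \<tau> *\<^sub>R outer v v) = mat 1"
    using rank_one_update_inverse[of \<sigma> v] \<open>1 + \<sigma> * c = t\<close> \<open>t > 0\<close>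
    by (simp add: S_def c_def)
  have "\<tau> * (t * (1 + t)) = 1"
    using \<open>t > 0\<close> by (simp add: \<tau>_def)
  then have \<tau>_identity: "(1 - c) * (2 * \<tau> + \<tau>\<^sup>2 * c) = 1"
    unfolding c_eq by algebra
  have "\<exists>z. S *v z = y \<and> (1 - c) * (1 + z \<bullet> z) = (1 - c) * (1 + y \<bullet> y) + (v \<bullet> y)\<^sup>2" for y
  proof (intro exI conjI)
    let ?z = "(mat 1 + \<tau> *\<^sub>R outer v v) *v y"
    show "S *v ?z = y"
      by (simp add: matrix_vector_mul_assoc S_inverse)
    have "?z = y + (\<tau> * (v \<bullet> y)) *\<^sub>R v"
      by (simp add: matrix_vector_mult_add_rdistrib outer_mult_vec flip: scaleR_matrix_vector_assoc)
    then have "?z \<bullet> ?z = y \<bullet> y + (2 * \<tau> + \<tau>\<^sup>2 * c) * (v \<bullet> y)\<^sup>2"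
      by (simp add: c_def inner_add_left inner_add_right inner_commute power2_eq_square
          algebra_simps)
    with \<tau>_identity show "(1 - c) * (1 + ?z \<bullet> ?z) = (1 - c) * (1 + y \<bullet> y) + (v \<bullet> y)\<^sup>2"
      by algebra
  qed
  moreover have "transpose S = S"
    by (simp add: S_def transpose_rank_one_update)
  ultimately show thesis
    using that SS detS by (simp add: t_def c_def)
qed

(* N = S R with S, R the symmetric square roots of I - v v^T and I + z z^T, where S z = y. *)
lemma rank_two_update_factorization:
  fixes v y :: "real^'n"
  assumes "v \<bullet> v < 1"
  shows "\<exists>N. N ** transpose N = mat 1 - outer v v + outer y y
    \<and> det N = sqrt ((1 - v \<bullet> v) * (1 + y \<bullet> y) + (v \<bullet> y)\<^sup>2)"
proof -
  obtain S where tS: "transpose S = S" and SS: "S ** S = mat 1 - outer v v"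
    and detS: "det S = sqrt (1 - v \<bullet> v)"
    and preimage: "\<And>y. \<exists>z. S *v z = y
      \<and> (1 - v \<bullet> v) * (1 + z \<bullet> z) = (1 - v \<bullet> v) * (1 + y \<bullet> y) + (v \<bullet> y)\<^sup>2"
    using identity_minus_outer_square_root[OF assms] by blast
  obtain z where Sz: "S *v z = y"
    and zz: "(1 - v \<bullet> v) * (1 + z \<bullet> z) = (1 - v \<bullet> v) * (1 + y \<bullet> y) + (v \<bullet> y)\<^sup>2"
    using preimage by blast
  define R where "R = mat 1 + (1 / (1 + sqrt (1 + z \<bullet> z))) *\<^sub>R outer z z"
  have RR: "R ** R = mat 1 + outer z z" and detR: "det R = sqrt (1 + z \<bullet> z)"
    using rank_one_update_square_root[of 1 z] by (simp_all add: R_def add_nonneg_nonneg)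
  have tR: "transpose R = R"
    by (simp add: R_def transpose_rank_one_update)
  have "(S ** R) ** transpose (S ** R) = S ** (R ** R) ** transpose S"
    by (simp add: matrix_transpose_mul matrix_mul_assoc tR)
  also have "\<dots> = S ** S + S ** outer z z ** transpose S"
    by (simp add: RR matrix_add_ldistrib matrix_add_rdistrib tS)
  also have "\<dots> = mat 1 - outer v v + outer y y"
    by (simp add: SS Sz flip: outer_matrix_vector_mult)
  finally show ?thesis
    using detS detR zz by (intro exI[of _ "S ** R"]) (simp add: det_mul flip: real_sqrt_mult)
qed

section \<open>Frame operators\<close>

definition frame_operator :: "nat \<Rightarrow> (nat \<Rightarrow> real^'n) \<Rightarrow> real^'n^'n" where
  "frame_operator n v = (\<Sum>i<n. outer (v i) (v i))"

lemma frame_operator_mult_vec: "frame_operator n v *v x = (\<Sum>i<n. (v i \<bullet> x) *\<^sub>R v i)"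
  by (simp add: frame_operator_def matrix_sum_vector outer_mult_vec)

lemma frame_operator_fun_upd:
  assumes "i < n"
  shows "frame_operator n (v(i := y)) = frame_operator n v - outer (v i) (v i) + outer y y"
  using assms by (simp add: frame_operator_def sum.remove[of "{..<n}" i] algebra_simps)

lemma frame_operator_matrix_vector_mult:
  "frame_operator n (\<lambda>i. M *v v i) = M ** frame_operator n v ** transpose M"
  by (simp add: frame_operator_def outer_matrix_vector_mult matrix_sum_left matrix_sum_right
      matrix_mul_assoc)

lemma uframe_iff_frame_operator: "uframe n v \<longleftrightarrow> frame_operator n v = mat 1"
proof
  assume id: "frame_operator n v = mat 1"
  have "x \<in> span (v ` {..<n})" for x
  proof -
    have "x = frame_operator n v *v x"
      using id by simp
    also have "\<dots> \<in> span (v ` {..<n})"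
      unfolding frame_operator_mult_vec by (intro span_sum span_mul span_base) auto
    finally show ?thesis .
  qed
  then show "uframe n v"
    using id by (auto simp: uframe_def frame_operator_def outer_def)
qed (simp add: uframe_def frame_operator_def outer_def)

lemma uframe_inner_sum:
  assumes "uframe n v"
  shows "(\<Sum>i<n. (v i \<bullet> x) * (v i \<bullet> y)) = x \<bullet> y"
proof -
  have "x \<bullet> y = x \<bullet> (frame_operator n v *v y)"
    using assms by (simp add: uframe_iff_frame_operator)
  then show ?thesis
    by (simp add: frame_operator_mult_vec inner_sum_right inner_commute mult.commute)
qed

lemma uframe_inner_le_1:
  assumes "uframe n v" "i < n"
  shows "v i \<bullet> v i \<le> 1"
proof -
  have "(v i \<bullet> v i) * (v i \<bullet> v i) \<le> (\<Sum>l<n. (v l \<bullet> v i) * (v l \<bullet> v i))"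
    using assms(2) by (intro member_le_sum) auto
  then have "(v i \<bullet> v i) * (v i \<bullet> v i) \<le> v i \<bullet> v i * 1"
    using uframe_inner_sum[OF assms(1)] by simp
  then show ?thesis
    by (cases "v i = 0") (simp_all add: mult_le_cancel_left)
qed

lemma uframe_sum_inner_self:
  assumes "uframe n (v :: nat \<Rightarrow> real^'n)"
  shows "(\<Sum>i<n. v i \<bullet> v i) = real CARD('n)"
proof -
  have "(\<Sum>i<n. v i \<bullet> v i) = (\<Sum>a\<in>UNIV. \<Sum>i<n. v i $ a * v i $ a)"
    unfolding inner_vec_def inner_real_def by (rule sum.swap)
  also have "\<dots> = (\<Sum>a\<in>UNIV. frame_operator n v $ a $ a)"
    by (simp add: frame_operator_def outer_def)
  also have "\<dots> = real CARD('n)"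
    using assms by (simp add: uframe_iff_frame_operator mat_def)
  finally show ?thesis .
qed

section \<open>The symmetric polytope of a frame\<close>

definition frame_polytope :: "nat \<Rightarrow> (nat \<Rightarrow> real^'n) \<Rightarrow> (real^'n) set" where
  "frame_polytope n v = convex hull (v ` {..<n} \<union> uminus ` v ` {..<n})"

lemma frame_vol_eq_measure: "frame_vol n v = measure lebesgue (frame_polytope n v)"
  by (simp add: frame_vol_def frame_polytope_def)

lemma frame_polytope_mem: "i < n \<Longrightarrow> v i \<in> frame_polytope n v"
  unfolding frame_polytope_def by (rule hull_inc) auto

lemma convex_frame_polytope: "convex (frame_polytope n v)"
  by (simp add: frame_polytope_def)

lemma frame_polytope_lmeasurable: "frame_polytope n v \<in> lmeasurable"
  unfolding frame_polytope_def by (intro lmeasurable_compact finite_imp_compact_convex_hull) auto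

lemma frame_polytope_matrix_vector_mult:
  "frame_polytope n (\<lambda>i. M *v v i) = (\<lambda>x. M *v x) ` frame_polytope n v"
proof -
  have "(\<lambda>i. M *v v i) ` {..<n} \<union> uminus ` (\<lambda>i. M *v v i) ` {..<n}
      = (\<lambda>x. M *v x) ` (v ` {..<n} \<union> uminus ` v ` {..<n})"
    by (auto simp: image_image image_Un linear_neg[OF matrix_vector_mul_linear])
  then show ?thesis
    by (simp add: frame_polytope_def convex_hull_linear_image[OF matrix_vector_mul_linear])
qed

lemma uminus_frame_polytope: "uminus ` frame_polytope n v = frame_polytope n v"
proof -
  have "uminus ` (v ` {..<n} \<union> uminus ` v ` {..<n}) = v ` {..<n} \<union> uminus ` v ` {..<n}"
    by (auto simp: image_image image_Un)
  then show ?thesis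
    by (simp add: frame_polytope_def convex_hull_linear_image[OF linear_uminus])
qed

lemma frame_polytope_fun_upd_subset:
  assumes "y \<in> frame_polytope n v"
  shows "frame_polytope n (v(i := y)) \<subseteq> frame_polytope n v"
proof -
  have "(v(i := y)) ` {..<n} \<subseteq> frame_polytope n v"
    using assms frame_polytope_mem by auto
  then have "uminus ` (v(i := y)) ` {..<n} \<subseteq> frame_polytope n v"
    by (metis image_mono uminus_frame_polytope)
  with \<open>(v(i := y)) ` {..<n} \<subseteq> frame_polytope n v\<close> show ?thesis
    unfolding frame_polytope_def[of n "v(i := y)"]
    by (intro hull_minimal) (simp_all add: convex_frame_polytope)
qed

lemma frame_polytope_subset_cball:
  assumes "\<And>i. i < n \<Longrightarrow> norm (v i) \<le> 1"
  shows "frame_polytope n v \<subseteq> cball 0 1"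
  unfolding frame_polytope_def using assms by (intro hull_minimal) auto

lemma measure_frame_polytope_pos:
  assumes "span (v ` {..<n}) = UNIV"
  shows "0 < measure lebesgue (frame_polytope n v)"
proof -
  let ?P = "frame_polytope n v"
  have "n > 0"
    using assms by (metis lessThan_0 image_empty span_empty UNIV_not_singleton neq0_conv)
  then have "v 0 \<in> ?P" "- v 0 \<in> ?P"
    using frame_polytope_mem uminus_frame_polytope by blast+
  then have "(1/2) *\<^sub>R v 0 + (1/2) *\<^sub>R (- v 0) \<in> ?P"
    by (intro convexD[OF convex_frame_polytope]) auto
  then have "0 \<in> affine hull ?P"
    by (simp add: hull_inc)
  then have "affine hull ?P = span ?P"
    by (rule affine_hull_span_0)
  also have "\<dots> = UNIV"
    using assms span_mono[of "v ` {..<n}" ?P] frame_polytope_mem by blast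
  finally have "interior ?P = rel_interior ?P"
    by (simp add: rel_interior_interior)
  moreover have "rel_interior ?P \<noteq> {}"
    using \<open>v 0 \<in> ?P\<close> by (auto simp: rel_interior_eq_empty convex_frame_polytope)
  ultimately have "\<not> negligible ?P"
    by (metis negligible_convex_interior convex_frame_polytope)
  then have "measure lebesgue ?P \<noteq> 0"
    using negligible_iff_measure0[OF frame_polytope_lmeasurable[of n v]] by simp
  then show ?thesis
    using measure_nonneg[of lebesgue ?P] by linarith
qed

section \<open>Volume-minimal unit frames\<close>

lemma uframe_renormalization:
  fixes w :: "nat \<Rightarrow> real^'n"
  assumes "frame_operator n w = N ** transpose N" "det N \<noteq> 0"
  shows "\<exists>w' :: nat \<Rightarrow> real^'n. uframe n w' \<and> frame_vol n w' = frame_vol n w / \<bar>det N\<bar>"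
proof -
  obtain M :: "real^'n^'n" where MN: "M ** N = mat 1"
    using assms(2) invertible_det_nz invertible_def by blast
  then have "\<bar>det M\<bar> * \<bar>det N\<bar> = 1"
    by (metis abs_mult abs_one det_I det_mul)
  then have detM: "\<bar>det M\<bar> = 1 / \<bar>det N\<bar>"
    using assms(2) by (simp add: field_simps)
  define w' where "w' = (\<lambda>i. M *v w i)"
  have "frame_operator n w' = (M ** N) ** transpose (M ** N)"
    by (simp add: w'_def frame_operator_matrix_vector_mult assms(1) matrix_transpose_mul
        matrix_mul_assoc)
  then have "uframe n w'"
    by (simp add: MN uframe_iff_frame_operator)
  moreover have "frame_vol n w' = frame_vol n w / \<bar>det N\<bar>"
    using measure_linear_image_finite[OF matrix_vector_mul_linear frame_polytope_lmeasurable,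
        of M n w]
    by (simp add: w'_def frame_vol_eq_measure frame_polytope_matrix_vector_mult detM)
  ultimately show ?thesis
    by blast
qed

definition vol_minimal_uframe :: "nat \<Rightarrow> (nat \<Rightarrow> real^'n) \<Rightarrow> bool" where
  "vol_minimal_uframe n v \<longleftrightarrow>
    uframe n v \<and> (\<forall>w :: nat \<Rightarrow> real^'n. uframe n w \<longrightarrow> frame_vol n v \<le> frame_vol n w)"

lemma vol_minimal_uframeD:
  fixes v w :: "nat \<Rightarrow> real^'n"
  assumes "vol_minimal_uframe n v"
  shows "uframe n v" and "uframe n w \<Longrightarrow> frame_vol n v \<le> frame_vol n w"
  using assms by (simp_all add: vol_minimal_uframe_def)

lemma vol_minimal_uframe_replacement_bound:
  fixes v :: "nat \<Rightarrow> real^'n"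
  assumes min: "vol_minimal_uframe n v"
    and "i < n" "v i \<bullet> v i < 1" "y \<in> frame_polytope n v"
  shows "(1 - v i \<bullet> v i) * (1 + y \<bullet> y) + (v i \<bullet> y)\<^sup>2 \<le> 1"
proof (rule ccontr)
  define D where "D = (1 - v i \<bullet> v i) * (1 + y \<bullet> y) + (v i \<bullet> y)\<^sup>2"
  assume "\<not> ?thesis"
  then have "sqrt D > 1"
    by (simp add: D_def)
  obtain N where N: "N ** transpose N = mat 1 - outer (v i) (v i) + outer y y" "det N = sqrt D"
    using rank_two_update_factorization[OF \<open>v i \<bullet> v i < 1\<close>, of y] by (auto simp: D_def)
  have "frame_operator n (v(i := y)) = N ** transpose N"
    using vol_minimal_uframeD(1)[OF min] frame_operator_fun_upd[OF \<open>i < n\<close>, of v y]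
    by (simp add: N uframe_iff_frame_operator)
  moreover have "det N \<noteq> 0"
    using N(2) \<open>sqrt D > 1\<close> by simp
  ultimately obtain w :: "nat \<Rightarrow> real^'n"
    where "uframe n w" and w: "frame_vol n w = frame_vol n (v(i := y)) / sqrt D"
    using uframe_renormalization N(2) \<open>sqrt D > 1\<close> by (metis abs_of_pos less_trans zero_less_one)
  have "frame_vol n (v(i := y)) \<le> frame_vol n v"
    unfolding frame_vol_eq_measure
    using frame_polytope_fun_upd_subset[OF \<open>y \<in> frame_polytope n v\<close>, of i]
    by (intro measure_mono_fmeasurable frame_polytope_lmeasurable fmeasurableD)
  moreover have "frame_vol n v > 0"
    using vol_minimal_uframeD(1)[OF min]
    by (simp add: frame_vol_eq_measure measure_frame_polytope_pos uframe_def)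
  moreover have "frame_vol n v < frame_vol n v * sqrt D"
    using \<open>frame_vol n v > 0\<close> \<open>sqrt D > 1\<close> by simp
  ultimately have "frame_vol n (v(i := y)) < frame_vol n v * sqrt D"
    by linarith
  then have "frame_vol n w < frame_vol n v"
    unfolding w using \<open>sqrt D > 1\<close> by (simp add: divide_less_eq)
  with vol_minimal_uframeD(2)[OF min \<open>uframe n w\<close>] show False
    by simp
qed

lemma vol_minimal_uframe_extreme_point:
  fixes v :: "nat \<Rightarrow> real^'n"
  assumes min: "vol_minimal_uframe n v"
    and "i < n"
  shows "v i extreme_point_of frame_polytope n v"
proof (cases "v i \<bullet> v i < 1")
  case True
  define c where "c = v i \<bullet> v i"
  let ?f = "\<lambda>y. (1 - c) * (y \<bullet> y) + (v i \<bullet> y)\<^sup>2"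
  show ?thesis
  proof (rule extreme_point_of_strict_convex_max[where f = ?f])
    show "v i \<in> frame_polytope n v"
      using \<open>i < n\<close> by (rule frame_polytope_mem)
    show "?f y \<le> ?f (v i)" if "y \<in> frame_polytope n v" for y
      using vol_minimal_uframe_replacement_bound[OF min \<open>i < n\<close> True that]
      by (simp add: c_def algebra_simps power2_eq_square)
    show "?f ((1 - u) *\<^sub>R a + u *\<^sub>R b) < (1 - u) * ?f a + u * ?f b"
      if "a \<noteq> b" "0 < u" "u < 1" for a b u
      using inner_quadratic_strict_convex[of "1 - c" a b u "v i"] that True by (simp add: c_def)
  qed
next
  case False
  then have "v i \<bullet> v i = 1"
    using uframe_inner_le_1[OF vol_minimal_uframeD(1)[OF min] \<open>i < n\<close>] by simp
  show ?thesis
  proof (rule extreme_point_of_strict_convex_max[where f = "\<lambda>y. y \<bullet> y"])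
    show "v i \<in> frame_polytope n v"
      using \<open>i < n\<close> by (rule frame_polytope_mem)
    have "frame_polytope n v \<subseteq> cball 0 1"
      using uframe_inner_le_1[OF vol_minimal_uframeD(1)[OF min]]
      by (intro frame_polytope_subset_cball) (simp add: norm_eq_sqrt_inner)
    then show "y \<bullet> y \<le> v i \<bullet> v i" if "y \<in> frame_polytope n v" for y
      using that \<open>v i \<bullet> v i = 1\<close> by (auto simp: dot_square_norm abs_square_le_1)
    show "((1 - u) *\<^sub>R a + u *\<^sub>R b) \<bullet> ((1 - u) *\<^sub>R a + u *\<^sub>R b) < (1 - u) * (a \<bullet> a) + u * (b \<bullet> b)"
      if "a \<noteq> b" "0 < u" "u < 1" for a b u
      using inner_quadratic_strict_convex[of 1 a b u 0] that by simp
  qed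
qed

lemma vol_minimal_uframe_norm_le:
  fixes v :: "nat \<Rightarrow> real^'n"
  assumes min: "vol_minimal_uframe n v"
    and "i < n" "j < n"
  shows "norm (v j) \<le> sqrt 2 * norm (v i)"
proof (rule ccontr)
  define a c where "a = v j \<bullet> v j" and "c = v i \<bullet> v i"
  assume "\<not> ?thesis"
  then have "(sqrt 2 * norm (v i))\<^sup>2 < (norm (v j))\<^sup>2"
    by (intro power_strict_mono) auto
  then have "2 * c < a"
    by (simp add: a_def c_def power_mult_distrib power2_norm_eq_inner)
  moreover have "a \<le> 1" "c \<ge> 0"
    using uframe_inner_le_1[OF vol_minimal_uframeD(1)[OF min] \<open>j < n\<close>]
    by (simp_all add: a_def c_def)
  ultimately have "c < 1/2"
    by linarith
  then have "(1 - c) * (1 + a) + (v i \<bullet> v j)\<^sup>2 \<le> 1"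
    using vol_minimal_uframe_replacement_bound[OF min \<open>i < n\<close> _ frame_polytope_mem[OF \<open>j < n\<close>]]
    by (simp add: a_def c_def)
  moreover have "(1 - c) * (1 + a) = 1 + (a - 2 * c) * (1 - c) + c * (1 - 2 * c)"
    by (simp add: algebra_simps)
  moreover have "(a - 2 * c) * (1 - c) > 0" "c * (1 - 2 * c) \<ge> 0"
    using \<open>2 * c < a\<close> \<open>c < 1/2\<close> \<open>c \<ge> 0\<close> by simp_all
  ultimately show False
    using zero_le_power2[of "v i \<bullet> v j"] by linarith
qed

lemma vol_minimal_uframe_inner_lower_bound:
  fixes v :: "nat \<Rightarrow> real^'n"
  assumes min: "vol_minimal_uframe n v"
    and "i < n"
  shows "real CARD('n) \<le> (v i \<bullet> v i) * (real n + real CARD('n) - 1)"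
proof (cases "v i \<bullet> v i < 1")
  case True
  define c where "c = v i \<bullet> v i"
  have uf: "uframe n v"
    using min by (rule vol_minimal_uframeD)
  have "(\<Sum>l<n. (1 - c) * (1 + v l \<bullet> v l) + (v l \<bullet> v i) * (v l \<bullet> v i)) \<le> (\<Sum>l<n. 1)"
    using vol_minimal_uframe_replacement_bound[OF min \<open>i < n\<close> True frame_polytope_mem]
    by (intro sum_mono) (simp add: c_def power2_eq_square inner_commute)
  moreover have "(\<Sum>l<n. (1 - c) * (1 + v l \<bullet> v l) + (v l \<bullet> v i) * (v l \<bullet> v i))
      = (1 - c) * (real n + real CARD('n)) + c"
    by (simp add: sum.distrib flip: sum_distrib_left)
      (simp add: uframe_sum_inner_self[OF uf] uframe_inner_sum[OF uf] c_def)
  ultimately show ?thesis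
    by (simp add: c_def algebra_simps)
next
  case False
  then show ?thesis
    using uframe_inner_le_1[OF vol_minimal_uframeD(1)[OF min] \<open>i < n\<close>] \<open>i < n\<close> by simp
qed

lemma uframe_collinear_sum_inner_le_1:
  fixes v :: "nat \<Rightarrow> real^'n"
  assumes uf: "uframe n v" and "I \<subseteq> {..<n}" and "collinear (insert 0 (v ` I))"
  shows "(\<Sum>i\<in>I. v i \<bullet> v i) \<le> 1"
proof -
  obtain u :: "real^'n" where "u \<noteq> 0" and u: "\<And>i. i \<in> I \<Longrightarrow> \<exists>c. v i = c *\<^sub>R u"
    using assms(3) unfolding collinear by (metis diff_zero insertCI image_eqI)
  define e where "e = u /\<^sub>R norm u"
  have "norm e = 1"
    using \<open>u \<noteq> 0\<close> by (simp add: e_def)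
  then have "e \<bullet> e = 1"
    by (simp add: norm_eq_1)
  have "v i \<bullet> v i = (v i \<bullet> e) * (v i \<bullet> e)" if i: "i \<in> I" for i
  proof -
    obtain c where "v i = c *\<^sub>R u"
      using u[OF i] by blast
    then have "v i = (c * norm u) *\<^sub>R e"
      using \<open>u \<noteq> 0\<close> by (simp add: e_def)
    then show ?thesis
      using \<open>e \<bullet> e = 1\<close> by simp
  qed
  then have "(\<Sum>i\<in>I. v i \<bullet> v i) = (\<Sum>i\<in>I. (v i \<bullet> e) * (v i \<bullet> e))"
    by simp
  also have "\<dots> \<le> (\<Sum>i<n. (v i \<bullet> e) * (v i \<bullet> e))"
    using assms(2) by (intro sum_mono2) auto
  also have "\<dots> = 1"
    using uframe_inner_sum[OF uf] \<open>e \<bullet> e = 1\<close> by simp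
  finally show ?thesis .
qed

lemma vol_minimal_uframe_collinear_card_le:
  fixes v :: "nat \<Rightarrow> real^'n"
  assumes min: "vol_minimal_uframe n v"
    and I: "I \<subseteq> {..<n}" and "collinear (insert 0 (v ` I))"
  shows "card I \<le> n div CARD('n) + 1"
proof (cases "I = {}")
  case False
  let ?d = "real n + real CARD('n) - 1"
  have "finite I"
    using I finite_subset by blast
  with False I have "n > 0"
    by (auto simp: card_gt_0_iff)
  moreover have "CARD('n) > 0"
    by simp
  ultimately have "?d > 0"
    by linarith
  have "(\<Sum>i\<in>I. real CARD('n) / ?d) \<le> (\<Sum>i\<in>I. v i \<bullet> v i)"
    using vol_minimal_uframe_inner_lower_bound[OF min] I \<open>?d > 0\<close>
    by (intro sum_mono) (auto simp: divide_le_eq)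
  also have "\<dots> \<le> 1"
    using uframe_collinear_sum_inner_le_1[OF vol_minimal_uframeD(1)[OF min] assms(2,3)] .
  finally have "real (card I) * real CARD('n) \<le> ?d"
    using \<open>?d > 0\<close> by (simp add: field_simps)
  then have "(card I - 1) * CARD('n) \<le> n"
    using False \<open>finite I\<close> by (simp add: of_nat_diff card_gt_0_iff algebra_simps flip: of_nat_mult)
  then have "card I - 1 \<le> n div CARD('n)"
    by (simp add: less_eq_div_iff_mult_less_eq)
  then show ?thesis
    by linarith
qed simp

theorem lemma7:
  fixes n :: nat and v :: "nat \<Rightarrow> real^'k"
  assumes "n \<ge> CARD('k)"
    and "uframe n v"
    and "\<And>w :: nat \<Rightarrow> real^'k. uframe n w \<Longrightarrow> frame_vol n v \<le> frame_vol n w"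
  shows "(\<forall>i<n. v i extreme_point_of (convex hull (v ` {..<n} \<union> uminus ` v ` {..<n})))
    \<and> (\<forall>i<n. \<forall>j<n. norm (v j) \<le> sqrt 2 * norm (v i))
    \<and> (\<forall>I \<subseteq> {..<n}. collinear (insert 0 (v ` I)) \<longrightarrow> card I \<le> n div CARD('k) + 1)"
proof -
  have min: "vol_minimal_uframe n v"
    using assms(2,3) by (simp add: vol_minimal_uframe_def)
  show ?thesis
    using vol_minimal_uframe_extreme_point[OF min] vol_minimal_uframe_norm_le[OF min]
      vol_minimal_uframe_collinear_card_le[OF min]
    by (auto simp: frame_polytope_def)
qed

end
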